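(* Let $n\ge 1$ agents all value every item at $1$, and consider any online algorithm that in every round $s$ outputs a contiguous allocation $A^s$ of $M_s$ satisfying $v(A^s_i)\ge\frac1n v(M_s)-\frac{n-1}{n}\max_{g\in M_s}v(g)$ for all $i$. Let $t\ge n^2$ and $i\in[n]$, and write $t=ki-r$ with $0\le r<i$. If $k\ge n$ and the number of rounds is at least $kn$, then in round $kn$ item $g_t$ is assigned to agent $i$; moreover in round $t$ item $g_t$ is assigned to agent $n$. Consequently, if the number of rounds is large enough, $g_t$ is assigned to every agent in some round.
   Context: Items $g_1,g_2,\dots$ arrive online on a line; $M_s=\{g_1,\dots,g_s\}$. A contiguous allocation of $M_s$ is $A_i=\{g_{p_{i-1}+1},\dots,g_{p_i}\}$ for some $0=p_0\le p_1\le\dots\le p_n=s$, i.e. agent $i$ receives the $i$-th block from the left. The valuation is additive and identical for all agents. *)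

theory Defs
  imports Complex_Main
begin

(* Items are identified with their indices: item g_j is j (j >= 1). *)

definition items :: "nat \<Rightarrow> nat set" where
  "items s = {1..s}"

definition v :: "nat \<Rightarrow> real" where
  "v g = 1"

definition val :: "nat set \<Rightarrow> real" where
  "val A = (\<Sum>g\<in>A. v g)"

(* cut points p 0 = 0 <= p 1 <= ... <= p n = s describe a contiguous allocation of M_s *)
definition contiguous_alloc :: "nat \<Rightarrow> nat \<Rightarrow> (nat \<Rightarrow> nat) \<Rightarrow> bool" where
  "contiguous_alloc n s p \<longleftrightarrow> p 0 = 0 \<and> p n = s \<and> (\<forall>j<n. p j \<le> p (Suc j))"

definition agent_block :: "(nat \<Rightarrow> nat) \<Rightarrow> nat \<Rightarrow> nat set" where
  "agent_block p i = {p (i - 1) + 1 .. p i}"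

definition valid_run :: "nat \<Rightarrow> nat \<Rightarrow> (nat \<Rightarrow> nat \<Rightarrow> nat) \<Rightarrow> bool" where
  "valid_run n T alg \<longleftrightarrow>
     (\<forall>s\<in>{1..T}. contiguous_alloc n s (alg s) \<and>
        (\<forall>i\<in>{1..n}. val (agent_block (alg s) i)
            \<ge> val (items s) / real n - (real n - 1) / real n * Max (v ` items s)))"

end

theory Submission
  imports Defs
begin

text \<open>With unit values the guarantee says that in round \<open>s\<close> every block has more than
  \<open>s/n - 1\<close> items. In round \<open>kn\<close> this forces every block to have at least \<open>k\<close> items, and
  as the \<open>n\<close> blocks together hold exactly \<open>kn\<close> items, agent \<open>i\<close> receives precisely the items
  \<open>k(i-1)+1, \<dots>, ki\<close>; this window contains \<open>t\<close>. In round \<open>t \<ge> n\<close> the last block is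
  nonempty, so it contains the last item \<open>t\<close>. Finally, for every agent \<open>i\<close> the least
  \<open>k\<close> with \<open>ki \<ge> t\<close> satisfies \<open>n \<le> k \<le> t\<close>, so round \<open>kn \<le> nt\<close> hands \<open>g\<^sub>t\<close> to agent \<open>i\<close>.\<close>

lemma val_agent_block: "val (agent_block p i) = real (p i - p (i - 1))"
  unfolding val_def agent_block_def v_def by simp

lemma val_items: "val (items s) = real s"
  unfolding val_def items_def v_def by simp

lemma Max_v_items: "1 \<le> s \<Longrightarrow> Max (v ` items s) = 1"
  unfolding items_def v_def by (simp add: image_constant)

lemma valid_run_contiguous:
  "valid_run n T alg \<Longrightarrow> s \<in> {1..T} \<Longrightarrow> contiguous_alloc n s (alg s)"
  unfolding valid_run_def by blast

lemma valid_run_block_size: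
  assumes "valid_run n T alg" "s \<in> {1..T}" "i \<in> {1..n}"
  shows "s < n * (alg s i - alg s (i - 1) + 1)"
proof -
  let ?b = "alg s i - alg s (i - 1)"
  have n_pos: "real n > 0" using assms(3) by simp
  have "real ?b \<ge> real s / real n - (real n - 1) / real n"
    using assms unfolding valid_run_def
    by (auto simp: val_agent_block val_items Max_v_items)
  then have "real n * real ?b \<ge> real s - real n + 1"
    using n_pos by (simp add: field_simps)
  then have "real s < real n * real (?b + 1)" by (simp add: algebra_simps)
  then show ?thesis by (simp only: of_nat_mult[symmetric] of_nat_less_iff)
qed

lemma cuts_gap_sum:
  fixes p :: "nat \<Rightarrow> nat"
  assumes gaps: "\<And>j. j \<in> {1..n} \<Longrightarrow> p (j - 1) + k \<le> p j"
    and "j \<le> m" "m \<le> n"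
  shows "p j + k * (m - j) \<le> p m"
  using assms(2,3)
proof (induction m rule: dec_induct)
  case base
  then show ?case by simp
next
  case (step m)
  have "p j + k * (Suc m - j) = p j + k * (m - j) + k"
    using step.hyps(1) by (simp add: Suc_diff_le)
  also have "\<dots> \<le> p m + k" using step by simp
  also have "\<dots> \<le> p (Suc m)" using gaps[of "Suc m"] step.prems by simp
  finally show ?case .
qed

lemma cuts_eq_multiples:
  fixes p :: "nat \<Rightarrow> nat"
  assumes "p 0 = 0" "p n = k * n"
    and gaps: "\<And>j. j \<in> {1..n} \<Longrightarrow> p (j - 1) + k \<le> p j"
    and "i \<le> n"
  shows "p i = k * i"
proof -
  have "k * i \<le> p i" using cuts_gap_sum[of n p k, OF gaps, of 0 i] assms by simp
  moreover have "p i + k * (n - i) \<le> k * n" using cuts_gap_sum[of n p k, OF gaps, of i n] assms by simp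
  moreover have "k * n = k * i + k * (n - i)" using \<open>i \<le> n\<close> by (simp flip: add_mult_distrib2)
  ultimately show ?thesis by linarith
qed

lemma valid_run_round_multiple:
  assumes run: "valid_run n T alg" and "1 \<le> n" "1 \<le> k" "k * n \<le> T" "i \<le> n"
  shows "alg (k * n) i = k * i"
proof -
  have round: "k * n \<in> {1..T}" using assms by simp
  have "contiguous_alloc n (k * n) (alg (k * n))" using valid_run_contiguous[OF run round] .
  moreover have "alg (k * n) (j - 1) + k \<le> alg (k * n) j" if "j \<in> {1..n}" for j
  proof -
    define b where "b = alg (k * n) j - alg (k * n) (j - 1)"
    have "n * k < n * (b + 1)"
      using valid_run_block_size[OF run round that] by (simp add: b_def mult.commute)
    then have "k < b + 1" by (rule mult_less_cancel1[THEN iffD1, THEN conjunct2])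
    then show ?thesis using \<open>1 \<le> k\<close> unfolding b_def by linarith
  qed
  ultimately show ?thesis using cuts_eq_multiples[of "alg (k * n)" n k i] \<open>i \<le> n\<close>
    unfolding contiguous_alloc_def by blast
qed

lemma valid_run_item_in_round_multiple:
  assumes "valid_run n T alg" "i \<in> {1..n}" "1 \<le> k" "k * n \<le> T" "r < k" "t = k * i - r"
  shows "t \<in> agent_block (alg (k * n)) i"
proof -
  have "alg (k * n) i = k * i" "alg (k * n) (i - 1) = k * (i - 1)"
    using assms by (auto intro: valid_run_round_multiple)
  moreover have "k * i = k * (i - 1) + k" using assms(2)
    by (cases i) auto
  ultimately show ?thesis using assms(5,6) unfolding agent_block_def by auto
qed

lemma valid_run_last_agent_gets_newest:
  assumes run: "valid_run n T alg" and "1 \<le> n" "n \<le> s" "s \<le> T"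
  shows "s \<in> agent_block (alg s) n"
proof -
  have round: "s \<in> {1..T}" using assms by simp
  have "s < n * (alg s n - alg s (n - 1) + 1)"
    using valid_run_block_size[OF run round] \<open>1 \<le> n\<close> by simp
  then have "alg s (n - 1) < alg s n" using \<open>n \<le> s\<close> by (cases "alg s n - alg s (n - 1)") auto
  moreover have "alg s n = s"
    using valid_run_contiguous[OF run round] unfolding contiguous_alloc_def by blast
  ultimately show ?thesis unfolding agent_block_def by auto
qed

lemma ex_multiple_in_window:
  assumes "1 \<le> (i::nat)"
  shows "\<exists>k. t \<le> k * i \<and> k * i < t + i"
proof -
  define k where "k = (t + i - 1) div i"
  have "k * i + (t + i - 1) mod i = t + i - 1" unfolding k_def by simp
  moreover have "(t + i - 1) mod i < i" using assms by simp
  ultimately have "t \<le> k * i \<and> k * i < t + i" using assms by linarith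
  then show ?thesis by blast
qed

theorem mainTheorem7:
  fixes n t T :: nat and alg :: "nat \<Rightarrow> nat \<Rightarrow> nat"
  assumes "n \<ge> 1"
    and "valid_run n T alg"
    and "t \<ge> n ^ 2"
  shows "(\<forall>i\<in>{1..n}. \<forall>k r. t = k * i - r \<and> r < i \<and> k \<ge> n \<and> T \<ge> k * n
            \<longrightarrow> t \<in> agent_block (alg (k * n)) i)
       \<and> (t \<le> T \<longrightarrow> t \<in> agent_block (alg t) n)
       \<and> (T \<ge> n * t \<longrightarrow> (\<forall>i\<in>{1..n}. \<exists>s\<in>{1..T}. t \<in> agent_block (alg s) i))"
proof (intro conjI impI ballI allI)
  have square_le_t: "n * n \<le> t" using assms(3) by (simp add: power2_eq_square)
  then have "n \<le> t" using assms(1) by (metis le_trans mult_le_mono2 mult.right_neutral)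
  show "t \<in> agent_block (alg (k * n)) i"
    if "i \<in> {1..n}" "t = k * i - r \<and> r < i \<and> k \<ge> n \<and> T \<ge> k * n" for i k r
    using that assms(1) by (intro valid_run_item_in_round_multiple[OF assms(2)]) auto
  show "t \<in> agent_block (alg t) n" if "t \<le> T"
    using assms(1) \<open>n \<le> t\<close> that by (rule valid_run_last_agent_gets_newest[OF assms(2)])
  show "\<exists>s\<in>{1..T}. t \<in> agent_block (alg s) i" if T_ge: "n * t \<le> T" and i: "i \<in> {1..n}" for i
  proof -
    obtain k where k: "t \<le> k * i" "k * i < t + i" using ex_multiple_in_window[of i t] i by auto
    have "n * i \<le> k * i" using k(1) square_le_t i by (meson atLeastAtMost_iff le_trans mult_le_mono2)
    then have "n \<le> k" using i by simp
    have "k - 1 \<le> (k - 1) * i" using i by simp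
    also have "\<dots> = k * i - i" by (simp add: diff_mult_distrib)
    also have "\<dots> < t" using k(2) \<open>n \<le> t\<close> assms(1) by linarith
    finally have "k \<le> t" by simp
    then have "k * n \<le> T" using T_ge by (metis le_trans mult.commute mult_le_mono2)
    then have "t \<in> agent_block (alg (k * n)) i"
      using k \<open>n \<le> k\<close> i assms(1)
      by (intro valid_run_item_in_round_multiple[OF assms(2), where r = "k * i - t"]) auto
    moreover have "k * n \<in> {1..T}" using \<open>k * n \<le> T\<close> \<open>n \<le> k\<close> assms(1) by simp
    ultimately show ?thesis by blast
  qed
qed

end
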